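(* Let $\Gamma$ be a finitely generated discrete group with right-invariant word metric $d$. For a bounded linear map $T:C^*_r(\Gamma)\to\mathcal{B}(\ell^2(\Gamma))$ define $u_T:\Gamma\times\Gamma\to\mathbb{C}$ by $u_T(s,t)=\langle\delta_s, T(\lambda_{st^{-1}})\delta_t\rangle$. Then $u_T\in\ell^\infty(\Gamma\times\Gamma)$ and: (i) if $T$ is unital and completely positive, then $u_T$ is positive definite; (ii) if $T$ has finite rank and takes values in $UC^*(\Gamma)$, then $u_T\in C_0(\Gamma\times\Gamma;\Delta)$; (iii) if $(T_\lambda)$ is a net of bounded linear maps $C^*_r(\Gamma)\to\mathcal{B}(\ell^2(\Gamma))$ with $\|T_\lambda(x)-x\|\to0$ for all $x\in C^*_r(\Gamma)$, then $u_{T_\lambda}\to1$ uniformly on $\{(s,t):d(s,t)<R\}$ for every $R>0$.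
   Context: Fix a finite symmetric generating set of $\Gamma$ with word length $l$, and let $d(s,t)=l(st^{-1})$. $\lambda_t\delta_r=\delta_{tr}$ is the left regular representation on $\ell^2(\Gamma)$, $\delta_r$ the indicator of $r$, and $C^*_r(\Gamma)$ the norm closure of the span of the $\lambda_t$. $UC^*(\Gamma)$ is the norm closure in $\mathcal{B}(\ell^2(\Gamma))$ of the operators given by bounded matrices $A(s,t)$ vanishing when $d(s,t)>R$ for some $R$ (acting by $(A\xi)(s)=\sum_rA(s,r)\xi(r)$). A function $f$ on $\Gamma\times\Gamma$ is positive definite if $\sum_{i,j}\overline{z_i}f(s_i,s_j)z_j\ge0$ for all finite families $s_i\in\Gamma$, $z_i\in\mathbb{C}$. $C_0(\Gamma\times\Gamma;\Delta)$ is the set of bounded $f$ on $\Gamma\times\Gamma$ such that for every $\epsilon>0$ there is $R>0$ with $|f(s,t)|<\epsilon$ whenever $d(s,t)>R$. *)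

theory Defs
  imports "HOL-Analysis.Analysis"
begin

text \<open>The group \<Gamma> is a type of class group_add (written additively, not necessarily
commutative): s t^{-1} is written s - t = s + (- t), the identity is 0.
Operators on l^2(\<Gamma>) are represented as maps ('g => complex) => ('g => complex),
only their behaviour on the subset l2 of square-summable functions matters.\<close>

type_synonym 'g op = "('g \<Rightarrow> complex) \<Rightarrow> ('g \<Rightarrow> complex)"

definition generating_set :: "'g::group_add set \<Rightarrow> bool" where
  "generating_set S \<longleftrightarrow> finite S \<and> uminus ` S = S \<and>
     (\<forall>g. \<exists>xs. set xs \<subseteq> S \<and> sum_list xs = g)"

definition word_length :: "'g::group_add set \<Rightarrow> 'g \<Rightarrow> nat" where
  "word_length S g = (LEAST n. \<exists>xs. length xs = n \<and> set xs \<subseteq> S \<and> sum_list xs = g)"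

definition word_dist :: "'g::group_add set \<Rightarrow> 'g \<Rightarrow> 'g \<Rightarrow> nat" where
  "word_dist S s t = word_length S (s - t)"

definition l2 :: "('g \<Rightarrow> complex) set" where
  "l2 = {f. (\<lambda>x. (cmod (f x))\<^sup>2) summable_on UNIV}"

definition l2_norm :: "('g \<Rightarrow> complex) \<Rightarrow> real" where
  "l2_norm f = sqrt (\<Sum>\<^sub>\<infinity>x. (cmod (f x))\<^sup>2)"

definition l2_inner :: "('g \<Rightarrow> complex) \<Rightarrow> ('g \<Rightarrow> complex) \<Rightarrow> complex" where
  "l2_inner f g = (\<Sum>\<^sub>\<infinity>x. cnj (f x) * g x)"

definition delta :: "'g \<Rightarrow> 'g \<Rightarrow> complex" where
  "delta s = (\<lambda>r. if r = s then 1 else 0)"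

definition bounded_op :: "'g op \<Rightarrow> bool" where
  "bounded_op A \<longleftrightarrow> (\<forall>f\<in>l2. A f \<in> l2) \<and>
     (\<forall>f\<in>l2. \<forall>g\<in>l2. \<forall>c. A (\<lambda>x. f x + c * g x) = (\<lambda>x. A f x + c * A g x)) \<and>
     (\<exists>K. \<forall>f\<in>l2. l2_norm (A f) \<le> K * l2_norm f)"

definition op_norm :: "'g op \<Rightarrow> real" where
  "op_norm A = Sup {l2_norm (A f) | f. f \<in> l2 \<and> l2_norm f \<le> 1}"

definition op_diff :: "'g op \<Rightarrow> 'g op \<Rightarrow> 'g op" where
  "op_diff A B = (\<lambda>f x. A f x - B f x)"

text \<open>Left regular representation: (lambda_t xi)(x) = xi(t^{-1} x), so lambda_t delta_r = delta_{tr}.\<close>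
definition lam :: "'g::group_add \<Rightarrow> 'g op" where
  "lam t = (\<lambda>f x. f (- t + x))"

definition Cr :: "'g::group_add op set" where
  "Cr = {A. bounded_op A \<and> (\<forall>\<epsilon>>0. \<exists>F c. finite F \<and>
      op_norm (op_diff A (\<lambda>f x. \<Sum>t\<in>F. c t * lam t f x)) < \<epsilon>)}"

definition mat_op :: "('g \<Rightarrow> 'g \<Rightarrow> complex) \<Rightarrow> 'g op" where
  "mat_op M = (\<lambda>\<xi> s. \<Sum>\<^sub>\<infinity>r. M s r * \<xi> r)"

definition UC :: "'g::group_add set \<Rightarrow> 'g op set" where
  "UC S = {A. bounded_op A \<and> (\<forall>\<epsilon>>0. \<exists>M R C.
      (\<forall>s t. cmod (M s t) \<le> C) \<and> (\<forall>s t. real (word_dist S s t) > R \<longrightarrow> M s t = 0) \<and>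
      op_norm (op_diff A (mat_op M)) < \<epsilon>)}"

definition bounded_linear_Cr :: "('g::group_add op \<Rightarrow> 'g op) \<Rightarrow> bool" where
  "bounded_linear_Cr T \<longleftrightarrow> (\<forall>x\<in>Cr. bounded_op (T x)) \<and>
     (\<forall>x\<in>Cr. \<forall>y\<in>Cr. \<forall>c. \<forall>f\<in>l2.
        T (\<lambda>g z. x g z + c * y g z) f = (\<lambda>z. T x f z + c * T y f z)) \<and>
     (\<exists>K. \<forall>x\<in>Cr. op_norm (T x) \<le> K * op_norm x)"

definition cnonneg :: "complex \<Rightarrow> bool" where
  "cnonneg z \<longleftrightarrow> Im z = 0 \<and> 0 \<le> Re z"

definition op_matrix_pos :: "nat \<Rightarrow> (nat \<Rightarrow> nat \<Rightarrow> 'g op) \<Rightarrow> bool" where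
  "op_matrix_pos n x \<longleftrightarrow> (\<forall>\<xi>. (\<forall>i<n. \<xi> i \<in> l2) \<longrightarrow>
      cnonneg (\<Sum>i<n. \<Sum>j<n. l2_inner (\<xi> i) (x i j (\<xi> j))))"

definition completely_positive :: "('g::group_add op \<Rightarrow> 'g op) \<Rightarrow> bool" where
  "completely_positive T \<longleftrightarrow> (\<forall>n x. (\<forall>i<n. \<forall>j<n. x i j \<in> Cr) \<and> op_matrix_pos n x
      \<longrightarrow> op_matrix_pos n (\<lambda>i j. T (x i j)))"

definition unital :: "('g::group_add op \<Rightarrow> 'g op) \<Rightarrow> bool" where
  "unital T \<longleftrightarrow> (\<forall>f\<in>l2. T (\<lambda>f. f) f = f)"

definition finite_rank :: "('g::group_add op \<Rightarrow> 'g op) \<Rightarrow> bool" where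
  "finite_rank T \<longleftrightarrow> (\<exists>k (B :: nat \<Rightarrow> 'g op). \<forall>x\<in>Cr. \<exists>c. \<forall>f\<in>l2.
      T x f = (\<lambda>z. \<Sum>i<k. c i * B i f z))"

definition u_T :: "('g::group_add op \<Rightarrow> 'g op) \<Rightarrow> 'g \<Rightarrow> 'g \<Rightarrow> complex" where
  "u_T T s t = l2_inner (delta s) (T (lam (s - t)) (delta t))"

definition positive_definite :: "('g \<Rightarrow> 'g \<Rightarrow> complex) \<Rightarrow> bool" where
  "positive_definite u \<longleftrightarrow> (\<forall>n (s :: nat \<Rightarrow> 'g) (z :: nat \<Rightarrow> complex).
      cnonneg (\<Sum>i<n. \<Sum>j<n. cnj (z i) * u (s i) (s j) * z j))"

definition bounded_fun2 :: "('g \<Rightarrow> 'g \<Rightarrow> complex) \<Rightarrow> bool" where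
  "bounded_fun2 u \<longleftrightarrow> (\<exists>C. \<forall>s t. cmod (u s t) \<le> C)"

definition C0_Delta :: "'g::group_add set \<Rightarrow> ('g \<Rightarrow> 'g \<Rightarrow> complex) \<Rightarrow> bool" where
  "C0_Delta S u \<longleftrightarrow> bounded_fun2 u \<and>
     (\<forall>\<epsilon>>0. \<exists>R>0. \<forall>s t. real (word_dist S s t) > R \<longrightarrow> cmod (u s t) < \<epsilon>)"

definition directed_set :: "('i \<Rightarrow> 'i \<Rightarrow> bool) \<Rightarrow> bool" where
  "directed_set le \<longleftrightarrow> (\<forall>a. le a a) \<and> (\<forall>a b c. le a b \<longrightarrow> le b c \<longrightarrow> le a c) \<and>
     (\<forall>a b. \<exists>c. le a c \<and> le b c)"

end

theory Submission
  imports Defs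
begin

text \<open>The value \<open>u\<^sub>T(s,t)\<close> is the \<open>(s,t)\<close> matrix coefficient of \<open>T(\<lambda>(s t\<^sup>-\<^sup>1))\<close>, and a
  matrix coefficient of an operator is bounded by its norm. This bounds \<open>u\<^sub>T\<close>, and (iii) follows
  by applying it to \<open>T\<^sub>a(\<lambda>(g)) - \<lambda>(g)\<close> for the finitely many \<open>g\<close> in a ball of the word metric.
  For (i), the operator matrix \<open>[\<lambda>(s\<^sub>i s\<^sub>j\<^sup>-\<^sup>1)] = [\<lambda>(s\<^sub>i) \<lambda>(s\<^sub>j)\<^sup>*]\<close> is positive, complete
  positivity carries this over to \<open>[T(\<lambda>(s\<^sub>i s\<^sub>j\<^sup>-\<^sup>1))]\<close>, and testing against the vectors
  \<open>z\<^sub>i \<delta>(s\<^sub>i)\<close> gives positive definiteness of \<open>u\<^sub>T\<close>. For (ii), the coefficient functions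
  \<open>(s,t) \<mapsto> \<langle>\<delta>\<^sub>s, T(\<lambda>(g)) \<delta>\<^sub>t\<rangle>\<close>, one for each \<open>g\<close>, lie in a single finite-dimensional space and
  are uniformly bounded, and each decays away from the diagonal because \<open>T(\<lambda>(g))\<close> is a norm limit
  of finite-propagation matrices. In a finite-dimensional space such decay is automatically uniform
  over the family (by induction on the dimension), and \<open>u\<^sub>T(s,t)\<close> is the value at \<open>(s,t)\<close> of the
  member with \<open>g = s t\<^sup>-\<^sup>1\<close>.\<close>

lemma has_sum_singleton_support:
  fixes f :: "'a \<Rightarrow> 'b::{topological_comm_monoid_add,t2_space}"
  assumes "\<And>x. x \<noteq> s \<Longrightarrow> f x = 0"
  shows "(f has_sum f s) UNIV"
  by (rule has_sum_finite_neutralI[of "{s}"]) (use assms in auto)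

lemma infsum_singleton_support:
  fixes f :: "'a \<Rightarrow> 'b::{topological_comm_monoid_add,t2_space}"
  assumes "\<And>x. x \<noteq> s \<Longrightarrow> f x = 0"
  shows "(\<Sum>\<^sub>\<infinity>x. f x) = f s"
  by (rule infsumI[OF has_sum_singleton_support[OF assms]])

lemma has_sum_sum_fun:
  fixes f :: "'i \<Rightarrow> 'a \<Rightarrow> 'b::topological_comm_monoid_add"
  assumes "finite I" "\<And>i. i \<in> I \<Longrightarrow> (f i has_sum s i) A"
  shows "((\<lambda>x. \<Sum>i\<in>I. f i x) has_sum (\<Sum>i\<in>I. s i)) A"
  using assms
proof (induction I rule: finite_induct)
  case (insert i I)
  then have "((\<lambda>x. f i x + (\<Sum>j\<in>I. f j x)) has_sum (s i + (\<Sum>j\<in>I. s j))) A"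
    by (intro has_sum_add) auto
  with insert.hyps show ?case
    by simp
qed simp

lemma l2_singleton_support: "(\<And>x. x \<noteq> s \<Longrightarrow> f x = 0) \<Longrightarrow> f \<in> l2"
  unfolding l2_def using has_sum_singleton_support[of s "\<lambda>x. (cmod (f x))\<^sup>2"]
  by (auto simp: summable_on_def)

lemma delta_in_l2 [simp]: "delta t \<in> l2"
  by (rule l2_singleton_support[of t]) (simp add: delta_def)

lemma zero_in_l2 [simp]: "(\<lambda>x. 0) \<in> l2"
  by (rule l2_singleton_support) simp

lemma l2_norm_delta [simp]: "l2_norm (delta t) = 1"
  unfolding l2_norm_def by (subst infsum_singleton_support[of t]) (auto simp: delta_def)

lemma l2_norm_zero [simp]: "l2_norm (\<lambda>x. 0) = 0"
  by (simp add: l2_norm_def)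

lemma l2_norm_nonneg: "0 \<le> l2_norm f"
  unfolding l2_norm_def by (simp add: infsum_nonneg)

lemma power2_l2_norm: "(l2_norm f)\<^sup>2 = (\<Sum>\<^sub>\<infinity>x. (cmod (f x))\<^sup>2)"
  unfolding l2_norm_def by (simp add: infsum_nonneg)

lemma norm_le_l2_norm:
  assumes "f \<in> l2"
  shows "cmod (f s) \<le> l2_norm f"
proof -
  have "(cmod (f s))\<^sup>2 = (\<Sum>\<^sub>\<infinity>x\<in>{s}. (cmod (f x))\<^sup>2)"
    by simp
  also have "\<dots> \<le> (\<Sum>\<^sub>\<infinity>x. (cmod (f x))\<^sup>2)"
    by (rule infsum_mono_neutral) (use assms in \<open>auto simp: l2_def\<close>)
  finally show ?thesis
    unfolding l2_norm_def by (simp add: real_le_rsqrt)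
qed

lemma l2_diff:
  assumes f: "f \<in> l2" and g: "g \<in> l2"
  shows "(\<lambda>x. f x - g x) \<in> l2"
    and "(l2_norm (\<lambda>x. f x - g x))\<^sup>2 \<le> 2 * (l2_norm f)\<^sup>2 + 2 * (l2_norm g)\<^sup>2"
proof -
  have pointwise: "(cmod (a - b))\<^sup>2 \<le> 2 * (cmod a)\<^sup>2 + 2 * (cmod b)\<^sup>2" for a b :: complex
  proof -
    have "(cmod (a - b))\<^sup>2 \<le> (cmod a + cmod b)\<^sup>2"
      by (rule power_mono[OF norm_triangle_ineq4]) simp
    also have "\<dots> \<le> 2 * (cmod a)\<^sup>2 + 2 * (cmod b)\<^sup>2"
      unfolding power2_sum using sum_squares_bound[of "cmod a" "cmod b"] by linarith
    finally show ?thesis .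
  qed
  have sf: "(\<lambda>x. (cmod (f x))\<^sup>2) summable_on UNIV" and sg: "(\<lambda>x. (cmod (g x))\<^sup>2) summable_on UNIV"
    using f g by (simp_all add: l2_def)
  let ?h = "\<lambda>x. 2 * (cmod (f x))\<^sup>2 + 2 * (cmod (g x))\<^sup>2"
  have sh: "?h summable_on UNIV"
    by (intro summable_on_add summable_on_cmult_right sf sg)
  have s: "(\<lambda>x. (cmod (f x - g x))\<^sup>2) summable_on UNIV"
    by (rule summable_on_comparison_test[OF sh]) (auto simp: pointwise)
  then show "(\<lambda>x. f x - g x) \<in> l2"
    by (simp add: l2_def)
  have "(l2_norm (\<lambda>x. f x - g x))\<^sup>2 \<le> (\<Sum>\<^sub>\<infinity>x. ?h x)"
    unfolding power2_l2_norm by (rule infsum_mono[OF s sh]) (simp add: pointwise)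
  also have "\<dots> = 2 * (l2_norm f)\<^sup>2 + 2 * (l2_norm g)\<^sup>2"
    by (simp add: infsum_add summable_on_cmult_right sf sg infsum_cmult_right power2_l2_norm)
  finally show "(l2_norm (\<lambda>x. f x - g x))\<^sup>2 \<le> 2 * (l2_norm f)\<^sup>2 + 2 * (l2_norm g)\<^sup>2" .
qed

lemma l2_inner_delta: "l2_inner (delta s) h = h s"
  unfolding l2_inner_def by (subst infsum_singleton_support[of s]) (auto simp: delta_def)

lemma l2_inner_scaled_delta: "l2_inner (\<lambda>r. c * delta s r) h = cnj c * h s"
  unfolding l2_inner_def by (subst infsum_singleton_support[of s]) (auto simp: delta_def)

lemma l2_inner_self_nonneg: "cnonneg (l2_inner f f)"
proof -
  have norm_sq: "cnj z * z = complex_of_real ((cmod z)\<^sup>2)" for z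
    by (subst complex_norm_square) (rule mult.commute)
  have "l2_inner f f = (\<Sum>\<^sub>\<infinity>x. complex_of_real ((cmod (f x))\<^sup>2))"
    unfolding l2_inner_def norm_sq ..
  also have "\<dots> = of_real (\<Sum>\<^sub>\<infinity>x. (cmod (f x))\<^sup>2)"
    by (intro infsum_bounded_linear_strong summable_on_bounded_linear_iff[where h' = Re]
        bounded_linear_of_real bounded_linear_Re) simp_all
  finally show ?thesis
    unfolding cnonneg_def by (simp add: infsum_nonneg)
qed

lemma summable_on_l2_inner:
  assumes f: "f \<in> l2" and g: "g \<in> l2"
  shows "(\<lambda>x. cnj (f x) * g x) summable_on UNIV"
proof -
  have "(\<lambda>x. (cmod (f x))\<^sup>2 + (cmod (g x))\<^sup>2) summable_on UNIV"
    using f g by (intro summable_on_add) (simp_all add: l2_def)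
  moreover have "cmod (f x) * cmod (g x) \<le> (cmod (f x))\<^sup>2 + (cmod (g x))\<^sup>2" for x
    using sum_squares_bound[of "cmod (f x)" "cmod (g x)"]
      mult_nonneg_nonneg[OF norm_ge_zero norm_ge_zero, of "f x" "g x"] by linarith
  ultimately have "(\<lambda>x. cmod (f x) * cmod (g x)) summable_on UNIV"
    by (rule summable_on_comparison_test) simp
  then show ?thesis
    by (simp add: summable_on_iff_abs_summable_on_complex norm_mult)
qed

lemma l2_inner_sum_sum:
  fixes n m :: nat
  assumes "\<And>i. i < n \<Longrightarrow> f i \<in> l2" and "\<And>j. j < m \<Longrightarrow> g j \<in> l2"
  shows "l2_inner (\<lambda>x. \<Sum>i<n. f i x) (\<lambda>x. \<Sum>j<m. g j x) = (\<Sum>i<n. \<Sum>j<m. l2_inner (f i) (g j))"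
proof -
  have expand: "cnj (\<Sum>i<n. f i x) * (\<Sum>j<m. g j x) = (\<Sum>i<n. \<Sum>j<m. cnj (f i x) * g j x)" for x
    by (simp add: sum_product)
  have "((\<lambda>x. \<Sum>i<n. \<Sum>j<m. cnj (f i x) * g j x) has_sum (\<Sum>i<n. \<Sum>j<m. l2_inner (f i) (g j))) UNIV"
    using assms unfolding l2_inner_def
    by (intro has_sum_sum_fun) (auto intro!: has_sum_infsum summable_on_l2_inner)
  then show ?thesis
    unfolding l2_inner_def expand by (rule infsumI)
qed

subsection \<open>Operator norms and matrix entries\<close>

text \<open>Unlike \<^const>\<open>bounded_op\<close>, this asks for no linearity: it is exactly what makes
  \<^const>\<open>op_norm\<close> the supremum of a bounded set, and it is plainly closed under \<^const>\<open>op_diff\<close>.\<close>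

definition norm_bounded_op :: "'g op \<Rightarrow> bool" where
  "norm_bounded_op A \<longleftrightarrow> (\<forall>f\<in>l2. A f \<in> l2) \<and> (\<exists>K. \<forall>f\<in>l2. l2_norm f \<le> 1 \<longrightarrow> l2_norm (A f) \<le> K)"

lemma l2_norm_le_op_norm:
  assumes "norm_bounded_op A" "f \<in> l2" "l2_norm f \<le> 1"
  shows "l2_norm (A f) \<le> op_norm A"
  unfolding op_norm_def
proof (rule cSup_upper)
  obtain K where "\<forall>f\<in>l2. l2_norm f \<le> 1 \<longrightarrow> l2_norm (A f) \<le> K"
    using assms(1) unfolding norm_bounded_op_def by blast
  then show "bdd_above {l2_norm (A f) |f. f \<in> l2 \<and> l2_norm f \<le> 1}"
    by (intro bdd_aboveI[where M = K]) blast
qed (use assms in auto)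

lemma op_norm_nonneg:
  assumes "norm_bounded_op A"
  shows "0 \<le> op_norm A"
  using l2_norm_le_op_norm[OF assms zero_in_l2] l2_norm_nonneg[of "A (\<lambda>x. 0)"] by simp

lemma matrix_entry_le_op_norm:
  assumes "norm_bounded_op A"
  shows "cmod (A (delta t) s) \<le> op_norm A"
proof -
  have "A (delta t) \<in> l2"
    using assms by (simp add: norm_bounded_op_def)
  then have "cmod (A (delta t) s) \<le> l2_norm (A (delta t))"
    by (rule norm_le_l2_norm)
  also have "\<dots> \<le> op_norm A"
    using assms by (rule l2_norm_le_op_norm) simp_all
  finally show ?thesis .
qed

lemma norm_bounded_op_diff:
  assumes "norm_bounded_op A" "norm_bounded_op B"
  shows "norm_bounded_op (op_diff A B)"
proof -
  obtain KA KB where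
      KA: "\<forall>f\<in>l2. l2_norm f \<le> 1 \<longrightarrow> l2_norm (A f) \<le> KA" and A: "\<forall>f\<in>l2. A f \<in> l2" and
      KB: "\<forall>f\<in>l2. l2_norm f \<le> 1 \<longrightarrow> l2_norm (B f) \<le> KB" and B: "\<forall>f\<in>l2. B f \<in> l2"
    using assms unfolding norm_bounded_op_def by blast
  have "l2_norm (op_diff A B f) \<le> sqrt (2 * KA\<^sup>2 + 2 * KB\<^sup>2)" if "f \<in> l2" "l2_norm f \<le> 1" for f
  proof -
    have "(l2_norm (A f))\<^sup>2 \<le> KA\<^sup>2" "(l2_norm (B f))\<^sup>2 \<le> KB\<^sup>2"
      using KA KB that by (auto intro!: power_mono l2_norm_nonneg)
    moreover have "(l2_norm (op_diff A B f))\<^sup>2 \<le> 2 * (l2_norm (A f))\<^sup>2 + 2 * (l2_norm (B f))\<^sup>2"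
      unfolding op_diff_def using A B that by (intro l2_diff(2)) auto
    ultimately have "(l2_norm (op_diff A B f))\<^sup>2 \<le> 2 * KA\<^sup>2 + 2 * KB\<^sup>2"
      by linarith
    then show ?thesis
      by (simp add: real_le_rsqrt)
  qed
  moreover have "op_diff A B f \<in> l2" if "f \<in> l2" for f
    unfolding op_diff_def using A B that by (intro l2_diff(1)) auto
  ultimately show ?thesis
    unfolding norm_bounded_op_def by blast
qed

lemma bounded_op_imp_norm_bounded_op:
  assumes "bounded_op A"
  shows "norm_bounded_op A"
proof -
  obtain K where K: "\<forall>f\<in>l2. l2_norm (A f) \<le> K * l2_norm f" and l2: "\<forall>f\<in>l2. A f \<in> l2"
    using assms unfolding bounded_op_def by blast
  have "l2_norm (A f) \<le> max K 0" if "f \<in> l2" "l2_norm f \<le> 1" for f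
  proof -
    have "l2_norm (A f) \<le> K * l2_norm f"
      using K that by blast
    also have "\<dots> \<le> max K 0 * l2_norm f"
      by (rule mult_right_mono) (simp_all add: l2_norm_nonneg)
    also have "\<dots> \<le> max K 0"
      using that by (simp add: mult_left_le)
    finally show ?thesis .
  qed
  with l2 show ?thesis
    unfolding norm_bounded_op_def by blast
qed

lemma bounded_op_scale:
  assumes "bounded_op A" "f \<in> l2"
  shows "A (\<lambda>x. c * f x) = (\<lambda>x. c * A f x)"
proof -
  have lin: "A (\<lambda>x. g x + c * h x) = (\<lambda>x. A g x + c * A h x)" if "g \<in> l2" "h \<in> l2" for g h c
    using assms(1) that unfolding bounded_op_def by blast
  have zero: "A (\<lambda>x. 0) = (\<lambda>x. 0)"
  proof
    fix y
    have "A (\<lambda>x. 0) y = A (\<lambda>x. 0) y + A (\<lambda>x. 0) y"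
      using fun_cong[OF lin[OF zero_in_l2 zero_in_l2, of 1], of y] by simp
    then show "A (\<lambda>x. 0) y = 0"
      by simp
  qed
  show ?thesis
    using lin[OF zero_in_l2 assms(2), of c] zero by simp
qed

lemma summable_on_translate:
  "(\<lambda>x. f (a + x)) summable_on UNIV \<longleftrightarrow> f summable_on UNIV" for a :: "'g::group_add"
  by (rule summable_on_reindex_bij_betw[OF bij_plus])

lemma infsum_translate:
  "(\<Sum>\<^sub>\<infinity>x. f (a + x)) = (\<Sum>\<^sub>\<infinity>x. f x)" for a :: "'g::group_add"
  by (rule infsum_reindex_bij_betw[OF bij_plus])

lemma lam_in_l2: "f \<in> l2 \<Longrightarrow> lam g f \<in> l2"
  using summable_on_translate[of "\<lambda>x. (cmod (f x))\<^sup>2" "- g"] by (simp add: l2_def lam_def)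

lemma l2_norm_lam [simp]: "l2_norm (lam g f) = l2_norm f"
  using infsum_translate[of "\<lambda>x. (cmod (f x))\<^sup>2" "- g"] by (simp add: l2_norm_def lam_def)

lemma bounded_op_lam: "bounded_op (lam g)"
  unfolding bounded_op_def by (auto simp: lam_in_l2 intro!: exI[of _ 1]) (simp add: lam_def)

lemma op_norm_lam_le: "op_norm (lam g) \<le> 1"
  unfolding op_norm_def by (rule cSup_least) (auto intro!: exI[of _ "\<lambda>x. 0"])

lemma lam_in_Cr: "lam g \<in> Cr"
proof -
  have "op_diff (lam g) (\<lambda>f x. \<Sum>t\<in>{g}. 1 * lam t f x) = (\<lambda>f x. 0)"
    by (simp add: op_diff_def)
  moreover have "op_norm (\<lambda>(f :: 'a \<Rightarrow> complex) (x :: 'a). 0 :: complex) = 0"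
    unfolding op_norm_def by (auto intro!: cSup_eq_maximum exI[of _ "\<lambda>x. 0"])
  ultimately show ?thesis
    unfolding Cr_def using bounded_op_lam by (auto intro!: exI[of _ "{g}"] exI[of _ "\<lambda>_. 1"])
qed

lemma lam_delta_diff: "lam (s - t) (delta t) s = 1"
  by (simp add: lam_def delta_def minus_diff_eq)

lemma lam_diff: "lam (a - b) f = lam a (lam (- b) f)"
proof -
  have "- (a - b) + x = b + (- a + x)" for x
    by (simp add: minus_diff_eq add.assoc[symmetric])
  then show ?thesis
    by (simp add: lam_def)
qed

lemma l2_inner_lam: "l2_inner f (lam a h) = l2_inner (lam (- a) f) h"
  unfolding l2_inner_def lam_def
  using infsum_translate[of "\<lambda>x. cnj (f x) * h (- a + x)" a] by (simp add: add.assoc[symmetric])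

lemma u_T_eq_entry: "u_T T s t = T (lam (s - t)) (delta t) s"
  by (simp add: u_T_def l2_inner_delta)

lemma norm_bounded_op_T_lam:
  assumes "bounded_linear_Cr T"
  shows "norm_bounded_op (T (lam g))"
  using assms lam_in_Cr unfolding bounded_linear_Cr_def by (blast intro: bounded_op_imp_norm_bounded_op)

lemma op_norm_T_lam_bounded:
  assumes "bounded_linear_Cr T"
  shows "\<exists>K. \<forall>g. op_norm (T (lam g)) \<le> K"
proof -
  obtain K where K: "\<forall>x\<in>Cr. op_norm (T x) \<le> K * op_norm x"
    using assms unfolding bounded_linear_Cr_def by blast
  have "op_norm (T (lam g)) \<le> max K 0" for g
  proof -
    have "op_norm (T (lam g)) \<le> K * op_norm (lam g)"
      using K lam_in_Cr by blast
    also have "\<dots> \<le> max K 0 * op_norm (lam g)"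
      using op_norm_nonneg[OF bounded_op_imp_norm_bounded_op[OF bounded_op_lam]]
      by (intro mult_right_mono) auto
    also have "\<dots> \<le> max K 0"
      by (rule mult_left_le[OF op_norm_lam_le]) simp
    finally show ?thesis .
  qed
  then show ?thesis
    by blast
qed

lemma bounded_u_T:
  assumes "bounded_linear_Cr T"
  shows "bounded_fun2 (u_T T)"
proof -
  obtain K where "\<forall>g. op_norm (T (lam g)) \<le> K"
    using op_norm_T_lam_bounded[OF assms] by blast
  then have "cmod (u_T T s t) \<le> K" for s t
    unfolding u_T_eq_entry
    using matrix_entry_le_op_norm[OF norm_bounded_op_T_lam[OF assms]] order_trans by blast
  then show ?thesis
    unfolding bounded_fun2_def by blast
qed

subsection \<open>Positive definiteness\<close>

text \<open>The Gram form of \<open>\<lambda>(s\<^sub>i - s\<^sub>j) = \<lambda>(s\<^sub>i) \<lambda>(s\<^sub>j)\<^sup>*\<close> is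
  \<open>\<parallel>\<Sum>\<^sub>j \<lambda>(s\<^sub>j)\<^sup>* \<xi>\<^sub>j\<parallel>\<^sup>2\<close>.\<close>

lemma op_matrix_pos_lam: "op_matrix_pos n (\<lambda>i j. lam (s i - s j))"
  unfolding op_matrix_pos_def
proof (intro allI impI)
  fix \<xi> :: "nat \<Rightarrow> 'a \<Rightarrow> complex"
  assume \<xi>: "\<forall>i<n. \<xi> i \<in> l2"
  define \<eta> where "\<eta> i = lam (- s i) (\<xi> i)" for i
  have "(\<Sum>i<n. \<Sum>j<n. l2_inner (\<xi> i) (lam (s i - s j) (\<xi> j))) = (\<Sum>i<n. \<Sum>j<n. l2_inner (\<eta> i) (\<eta> j))"
    unfolding \<eta>_def by (simp add: lam_diff l2_inner_lam)
  also have "\<dots> = l2_inner (\<lambda>x. \<Sum>i<n. \<eta> i x) (\<lambda>x. \<Sum>j<n. \<eta> j x)"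
    using \<xi> unfolding \<eta>_def by (intro l2_inner_sum_sum[symmetric]) (auto intro: lam_in_l2)
  finally show "cnonneg (\<Sum>i<n. \<Sum>j<n. l2_inner (\<xi> i) (lam (s i - s j) (\<xi> j)))"
    by (simp add: l2_inner_self_nonneg)
qed

lemma positive_definite_u_T:
  assumes "bounded_linear_Cr T" "completely_positive T"
  shows "positive_definite (u_T T)"
  unfolding positive_definite_def
proof (intro allI)
  fix n and s :: "nat \<Rightarrow> 'a" and z :: "nat \<Rightarrow> complex"
  define \<xi> where "\<xi> i = (\<lambda>r. z i * delta (s i) r)" for i
  have \<xi>: "\<xi> i \<in> l2" for i
    unfolding \<xi>_def by (rule l2_singleton_support[of "s i"]) (simp add: delta_def)
  have "op_matrix_pos n (\<lambda>i j. T (lam (s i - s j)))"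
    using assms(2)[unfolded completely_positive_def, rule_format, of n "\<lambda>i j. lam (s i - s j)"]
    by (simp add: lam_in_Cr op_matrix_pos_lam)
  then have "cnonneg (\<Sum>i<n. \<Sum>j<n. l2_inner (\<xi> i) (T (lam (s i - s j)) (\<xi> j)))"
    unfolding op_matrix_pos_def using \<xi> by simp
  moreover have "l2_inner (\<xi> i) (T (lam (s i - s j)) (\<xi> j)) = cnj (z i) * u_T T (s i) (s j) * z j" for i j
  proof -
    have "bounded_op (T (lam (s i - s j)))"
      using assms(1) lam_in_Cr unfolding bounded_linear_Cr_def by blast
    then show ?thesis
      unfolding \<xi>_def by (simp add: bounded_op_scale l2_inner_scaled_delta u_T_eq_entry)
  qed
  ultimately show "cnonneg (\<Sum>i<n. \<Sum>j<n. cnj (z i) * u_T T (s i) (s j) * z j)"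
    by simp
qed

subsection \<open>Word-metric balls and approximate identities\<close>

lemma word_length_attained:
  assumes "generating_set S"
  shows "\<exists>xs. length xs = word_length S g \<and> set xs \<subseteq> S \<and> sum_list xs = g"
proof -
  obtain xs where "set xs \<subseteq> S" "sum_list xs = g"
    using assms unfolding generating_set_def by blast
  then have "\<exists>ys. length ys = length xs \<and> set ys \<subseteq> S \<and> sum_list ys = g"
    by blast
  then show ?thesis
    unfolding word_length_def by (rule LeastI)
qed

lemma finite_word_ball:
  assumes "generating_set S"
  shows "finite {g. real (word_length S g) \<le> R}"
proof -
  obtain N :: nat where "R \<le> real N"
    using real_arch_simple by blast
  have "{g. real (word_length S g) \<le> R} \<subseteq> sum_list ` {xs. set xs \<subseteq> S \<and> length xs \<le> N}"
  proof
    fix g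
    assume "g \<in> {g. real (word_length S g) \<le> R}"
    with \<open>R \<le> real N\<close> have "word_length S g \<le> N"
      by simp
    with word_length_attained[OF assms, of g] show "g \<in> sum_list ` {xs. set xs \<subseteq> S \<and> length xs \<le> N}"
      by force
  qed
  moreover have "finite S"
    using assms by (simp add: generating_set_def)
  ultimately show ?thesis
    using finite_lists_length_le finite_subset by blast
qed

lemma directed_set_upper_bound:
  assumes "directed_set le" "finite A"
  shows "\<exists>b. \<forall>a\<in>A. le (h a) b"
  using assms(2)
proof (induction A rule: finite_induct)
  case (insert x A)
  then obtain b where "\<forall>a\<in>A. le (h a) b"
    by blast
  moreover obtain c where "le b c" "le (h x) c"
    using assms(1) unfolding directed_set_def by blast
  ultimately show ?case
    using assms(1) unfolding directed_set_def by blast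
qed simp

lemma u_T_uniform_convergence_on_tubes:
  assumes gen: "generating_set S" and dir: "directed_set le"
    and bl: "\<forall>a. bounded_linear_Cr (Tn a)"
    and conv: "\<forall>x\<in>Cr. \<forall>\<epsilon>>0. \<exists>a0. \<forall>a. le a0 a \<longrightarrow> op_norm (op_diff (Tn a x) x) < \<epsilon>"
    and "\<epsilon> > 0"
  shows "\<exists>a0. \<forall>a. le a0 a \<longrightarrow> (\<forall>s t. real (word_dist S s t) < R \<longrightarrow> cmod (u_T (Tn a) s t - 1) < \<epsilon>)"
proof -
  let ?G = "{g. real (word_length S g) \<le> R}"
  have "\<forall>g. \<exists>a0. \<forall>a. le a0 a \<longrightarrow> op_norm (op_diff (Tn a (lam g)) (lam g)) < \<epsilon>"
    using conv \<open>\<epsilon> > 0\<close> by (simp add: lam_in_Cr)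
  then obtain a0 where a0: "\<And>g a. le (a0 g) a \<Longrightarrow> op_norm (op_diff (Tn a (lam g)) (lam g)) < \<epsilon>"
    by metis
  obtain b where b: "\<forall>g\<in>?G. le (a0 g) b"
    using directed_set_upper_bound[OF dir finite_word_ball[OF gen]] by blast
  have "cmod (u_T (Tn a) s t - 1) < \<epsilon>" if "le b a" "real (word_dist S s t) < R" for a s t
  proof -
    have "le (a0 (s - t)) b"
      using b that(2) by (simp add: word_dist_def)
    with that(1) dir have "le (a0 (s - t)) a"
      unfolding directed_set_def by blast
    have "norm_bounded_op (op_diff (Tn a (lam (s - t))) (lam (s - t)))"
      using bl bounded_op_lam
      by (intro norm_bounded_op_diff norm_bounded_op_T_lam bounded_op_imp_norm_bounded_op) auto
    then have "cmod (op_diff (Tn a (lam (s - t))) (lam (s - t)) (delta t) s)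
        \<le> op_norm (op_diff (Tn a (lam (s - t))) (lam (s - t)))"
      by (rule matrix_entry_le_op_norm)
    also have "\<dots> < \<epsilon>"
      using a0 \<open>le (a0 (s - t)) a\<close> by blast
    finally show ?thesis
      by (simp add: op_diff_def u_T_eq_entry lam_delta_diff)
  qed
  then show ?thesis
    by blast
qed

subsection \<open>Uniform decay in a finite-dimensional span\<close>

definition in_span :: "nat \<Rightarrow> (nat \<Rightarrow> 'x \<Rightarrow> complex) \<Rightarrow> ('x \<Rightarrow> complex) \<Rightarrow> bool" where
  "in_span k E f \<longleftrightarrow> (\<exists>c. \<forall>x. f x = (\<Sum>i<k. c i * E i x))"

lemma in_span_eliminate_last:
  assumes "in_span (Suc m) E f"
    and f1: "\<And>y. f1 y = (\<Sum>i<Suc m. a i * E i y)" and "a m \<noteq> 0" and "f1 p = 1"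
  shows "in_span m (\<lambda>i y. E i y - E i p * f1 y) (\<lambda>y. f y - f p * f1 y)"
proof -
  obtain c where c: "\<And>y. f y = (\<Sum>i<Suc m. c i * E i y)"
    using assms(1) unfolding in_span_def by blast
  define d where "d i = c i - c m * a i / a m" for i
  define g where "g y = (\<Sum>i<m. d i * E i y)" for y
  have "g y = (\<Sum>i<m. c i * E i y) - c m / a m * (\<Sum>i<m. a i * E i y)" for y
  proof -
    have "g y = (\<Sum>i<m. c i * E i y - c m / a m * (a i * E i y))"
      unfolding g_def d_def by (rule sum.cong) (simp_all add: field_simps \<open>a m \<noteq> 0\<close>)
    then show ?thesis
      by (simp add: sum_subtractf sum_distrib_left)
  qed
  then have f_eq: "f y = g y + c m / a m * f1 y" for y
    using c[of y] f1[of y] \<open>a m \<noteq> 0\<close> by (simp add: field_simps)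
  have "f y - f p * f1 y = (\<Sum>i<m. d i * (E i y - E i p * f1 y))" for y
  proof -
    have "(\<Sum>i<m. d i * (E i y - E i p * f1 y)) = g y - g p * f1 y"
      unfolding g_def by (simp add: right_diff_distrib sum_subtractf sum_distrib_right mult.assoc)
    also have "\<dots> = f y - f p * f1 y"
      using f_eq[of y] f_eq[of p] \<open>f1 p = 1\<close> by (simp add: algebra_simps)
    finally show ?thesis
      by simp
  qed
  then show ?thesis
    unfolding in_span_def by blast
qed

lemma in_span_normalized_direction:
  assumes "in_span (Suc m) E f0" "\<not> in_span m E f0" "(f0 \<longlongrightarrow> 0) F" "\<forall>y. cmod (f0 y) \<le> B0"
  shows "\<exists>a p f1 B. (\<forall>y. f1 y = (\<Sum>i<Suc m. a i * E i y)) \<and> a m \<noteq> 0 \<and> f1 p = 1 \<and>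
    (f1 \<longlongrightarrow> 0) F \<and> (\<forall>y. cmod (f1 y) \<le> B)"
proof -
  obtain a where a: "\<And>y. f0 y = (\<Sum>i<Suc m. a i * E i y)"
    using assms(1) unfolding in_span_def by blast
  have "a m \<noteq> 0"
  proof
    assume "a m = 0"
    then have "\<forall>y. f0 y = (\<Sum>i<m. a i * E i y)"
      using a by simp
    with assms(2) show False
      unfolding in_span_def by blast
  qed
  have "\<exists>p. f0 p \<noteq> 0"
  proof (rule ccontr)
    assume "\<nexists>p. f0 p \<noteq> 0"
    then have "in_span m E f0"
      unfolding in_span_def by (auto intro!: exI[of _ "\<lambda>_. 0"])
    with assms(2) show False
      by blast
  qed
  then obtain p where p: "f0 p \<noteq> 0"
    by blast
  define f1 where "f1 y = f0 y / f0 p" for y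
  have "f1 y = (\<Sum>i<Suc m. a i / f0 p * E i y)" for y
    unfolding f1_def a[of y] sum_divide_distrib by simp
  moreover have "(f1 \<longlongrightarrow> 0) F"
    unfolding f1_def by (rule tendsto_divide_zero[OF assms(3)])
  moreover have "\<forall>y. cmod (f1 y) \<le> B0 / cmod (f0 p)"
    unfolding f1_def using assms(4) p by (simp add: norm_divide divide_right_mono)
  moreover have "f1 p = 1"
    unfolding f1_def using p by simp
  ultimately show ?thesis
    using \<open>a m \<noteq> 0\<close> p by (intro exI[of _ "\<lambda>i. a i / f0 p"] exI[of _ p] exI[of _ f1]) auto
qed

lemma subtract_normalized_direction:
  assumes "(f1 \<longlongrightarrow> 0) F" and B: "\<forall>y. cmod (f1 y) \<le> B"
    and "(f \<longlongrightarrow> 0) F" and K: "\<forall>y. cmod (f y) \<le> K"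
  shows "((\<lambda>y. f y - f p * f1 y) \<longlongrightarrow> 0) F"
    and "cmod (f y - f p * f1 y) \<le> K * (1 + B)"
proof -
  show "((\<lambda>y. f y - f p * f1 y) \<longlongrightarrow> 0) F"
    using tendsto_diff[OF assms(3) tendsto_mult_right_zero[OF assms(1)]] by simp
  have "K \<ge> 0"
    using K norm_ge_zero[of "f y"] by (meson order_trans)
  have "cmod (f y - f p * f1 y) \<le> cmod (f y) + cmod (f p) * cmod (f1 y)"
    using norm_triangle_ineq4[of "f y" "f p * f1 y"] by (simp add: norm_mult)
  also have "\<dots> \<le> K + K * B"
    using K B \<open>K \<ge> 0\<close> by (intro add_mono mult_mono) auto
  finally show "cmod (f y - f p * f1 y) \<le> K * (1 + B)"
    by (simp add: algebra_simps)
qed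

text \<open>The induction step: every \<open>f\<close> in the larger span is \<open>f(p) f\<^sub>1\<close>, which is uniformly small
  near infinity, plus a function in a span of one dimension less.\<close>

lemma uniformly_tendsto_zero_step:
  fixes E :: "nat \<Rightarrow> 'x \<Rightarrow> complex"
  assumes f1: "\<forall>y. f1 y = (\<Sum>i<Suc m. a i * E i y)" and "a m \<noteq> 0" and "f1 p = 1"
    and "(f1 \<longlongrightarrow> 0) F" and B: "\<forall>y. cmod (f1 y) \<le> B"
    and IH: "\<And>K \<epsilon>. \<epsilon> > 0 \<Longrightarrow> eventually (\<lambda>x. \<forall>f. in_span m (\<lambda>i y. E i y - E i p * f1 y) f \<and>
      (f \<longlongrightarrow> 0) F \<and> (\<forall>y. cmod (f y) \<le> K) \<longrightarrow> cmod (f x) < \<epsilon>) F"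
    and "\<epsilon> > 0"
  shows "eventually (\<lambda>x. \<forall>f. in_span (Suc m) E f \<and> (f \<longlongrightarrow> 0) F \<and> (\<forall>y. cmod (f y) \<le> K)
    \<longrightarrow> cmod (f x) < \<epsilon>) F"
proof -
  define \<delta> where "\<delta> = \<epsilon> / (2 * (\<bar>K\<bar> + 1))"
  have "\<delta> > 0"
    unfolding \<delta>_def using \<open>\<epsilon> > 0\<close> by (simp add: add_pos_nonneg)
  have "\<bar>K\<bar> * \<delta> \<le> \<epsilon> / 2"
    unfolding \<delta>_def using \<open>\<epsilon> > 0\<close> by (simp add: field_simps add_pos_nonneg)
  have "eventually (\<lambda>x. \<forall>f. in_span m (\<lambda>i y. E i y - E i p * f1 y) f \<and> (f \<longlongrightarrow> 0) F \<and>
      (\<forall>y. cmod (f y) \<le> K * (1 + B)) \<longrightarrow> cmod (f x) < \<epsilon> / 2) F"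
    using \<open>\<epsilon> > 0\<close> by (intro IH) simp
  moreover have "eventually (\<lambda>x. cmod (f1 x) < \<delta>) F"
    using \<open>(f1 \<longlongrightarrow> 0) F\<close> \<open>\<delta> > 0\<close> by (simp add: tendsto_iff)
  ultimately show ?thesis
  proof eventually_elim
    case (elim x)
    show ?case
    proof (intro allI impI)
      fix f
      assume f: "in_span (Suc m) E f \<and> (f \<longlongrightarrow> 0) F \<and> (\<forall>y. cmod (f y) \<le> K)"
      have "cmod (f p) \<le> \<bar>K\<bar>"
        using f abs_ge_self[of K] by (meson order_trans)
      then have "cmod (f p) * cmod (f1 x) \<le> \<bar>K\<bar> * \<delta>"
        using elim(2) by (intro mult_mono) auto
      moreover have "cmod (f x - f p * f1 x) < \<epsilon> / 2"
        using elim(1) f f1 \<open>a m \<noteq> 0\<close> \<open>f1 p = 1\<close> subtract_normalized_direction[OF \<open>(f1 \<longlongrightarrow> 0) F\<close> B]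
          in_span_eliminate_last[of m E f f1 a p]
        by blast
      moreover have "cmod (f x) \<le> cmod (f x - f p * f1 x) + cmod (f p) * cmod (f1 x)"
        using norm_triangle_ineq[of "f x - f p * f1 x" "f p * f1 x"] by (simp add: norm_mult)
      ultimately show "cmod (f x) < \<epsilon>"
        using \<open>\<bar>K\<bar> * \<delta> \<le> \<epsilon> / 2\<close> by linarith
    qed
  qed
qed

lemma uniformly_tendsto_zero_in_span:
  fixes E :: "nat \<Rightarrow> 'x \<Rightarrow> complex" and F :: "'x filter"
  assumes "\<epsilon> > 0"
  shows "eventually (\<lambda>x. \<forall>f. in_span k E f \<and> (f \<longlongrightarrow> 0) F \<and> (\<forall>y. cmod (f y) \<le> K)
    \<longrightarrow> cmod (f x) < \<epsilon>) F"
  using assms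
proof (induction k arbitrary: E K \<epsilon>)
  case 0
  then show ?case
    by (simp add: in_span_def)
next
  case (Suc m)
  show ?case
  proof (cases "\<exists>f0 B0. in_span (Suc m) E f0 \<and> \<not> in_span m E f0 \<and> (f0 \<longlongrightarrow> 0) F \<and>
      (\<forall>y. cmod (f0 y) \<le> B0)")
    case True
    then obtain f0 B0 where "in_span (Suc m) E f0" "\<not> in_span m E f0" "(f0 \<longlongrightarrow> 0) F"
      "\<forall>y. cmod (f0 y) \<le> B0"
      by blast
    from in_span_normalized_direction[OF this] obtain a p f1 B
      where "\<forall>y. f1 y = (\<Sum>i<Suc m. a i * E i y)" "a m \<noteq> 0" "f1 p = 1" "(f1 \<longlongrightarrow> 0) F"
        "\<forall>y. cmod (f1 y) \<le> B"
      by blast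
    then show ?thesis
      using Suc.IH Suc.prems by (rule uniformly_tendsto_zero_step)
  next
    case False
    then have reduce: "in_span m E f"
      if "in_span (Suc m) E f" "(f \<longlongrightarrow> 0) F" "\<forall>y. cmod (f y) \<le> K" for f
      using that by blast
    show ?thesis
      using Suc.IH[OF Suc.prems, of E K]
    proof (rule eventually_mono)
      fix x
      assume "\<forall>f. in_span m E f \<and> (f \<longlongrightarrow> 0) F \<and> (\<forall>y. cmod (f y) \<le> K) \<longrightarrow> cmod (f x) < \<epsilon>"
      then show "\<forall>f. in_span (Suc m) E f \<and> (f \<longlongrightarrow> 0) F \<and> (\<forall>y. cmod (f y) \<le> K) \<longrightarrow> cmod (f x) < \<epsilon>"
        using reduce by blast
    qed
  qed
qed

subsection \<open>Finite-propagation matrices\<close>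

lemma mat_op_delta: "mat_op M (delta t) s = M s t"
  unfolding mat_op_def by (subst infsum_singleton_support[of t]) (auto simp: delta_def)

lemma mat_op_finite_propagation:
  assumes gen: "generating_set S"
    and M0: "\<forall>s t. real (word_dist S s t) > R \<longrightarrow> M s t = 0"
  shows "mat_op M \<xi> s = (\<Sum>g\<in>{g. real (word_length S g) \<le> R}. M s (- g + s) * \<xi> (- g + s))"
proof -
  let ?G = "{g. real (word_length S g) \<le> R}"
  have "inj_on (\<lambda>g. - g + s) ?G"
    by (rule inj_onI) simp
  moreover have "M s r * \<xi> r = 0" if "r \<notin> (\<lambda>g. - g + s) ` ?G" for r
  proof -
    have "s - r \<in> ?G \<Longrightarrow> r \<in> (\<lambda>g. - g + s) ` ?G"
      by (rule image_eqI[of _ _ "s - r"]) (simp_all add: minus_diff_eq)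
    with that M0 show ?thesis
      unfolding word_dist_def by force
  qed
  ultimately have "mat_op M \<xi> s = (\<Sum>r\<in>(\<lambda>g. - g + s) ` ?G. M s r * \<xi> r)"
    unfolding mat_op_def using finite_word_ball[OF gen]
    by (subst infsum_cong_neutral[where T = "(\<lambda>g. - g + s) ` ?G"]) auto
  also have "\<dots> = (\<Sum>g\<in>?G. M s (- g + s) * \<xi> (- g + s))"
    using \<open>inj_on (\<lambda>g. - g + s) ?G\<close> by (simp add: sum.reindex)
  finally show ?thesis .
qed

lemma has_sum_sum_translates:
  fixes G :: "'g::group_add set"
  assumes "finite G" "\<xi> \<in> l2"
  shows "((\<lambda>s. \<Sum>g\<in>G. (cmod (\<xi> (- g + s)))\<^sup>2) has_sum real (card G) * (l2_norm \<xi>)\<^sup>2) UNIV"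
proof -
  have "((\<lambda>s. (cmod (\<xi> (- g + s)))\<^sup>2) has_sum (l2_norm \<xi>)\<^sup>2) UNIV" for g
    using summable_on_translate[of "\<lambda>x. (cmod (\<xi> x))\<^sup>2" "- g"] \<open>\<xi> \<in> l2\<close>
      infsum_translate[of "\<lambda>x. (cmod (\<xi> x))\<^sup>2" "- g"]
    by (simp add: has_sum_iff l2_def power2_l2_norm)
  then show ?thesis
    using has_sum_sum_fun[OF \<open>finite G\<close>] by fastforce
qed

lemma mat_op_pointwise_bound:
  assumes "generating_set S"
    and "\<forall>s t. cmod (M s t) \<le> C"
    and "\<forall>s t. real (word_dist S s t) > R \<longrightarrow> M s t = 0"
  defines "G \<equiv> {g. real (word_length S g) \<le> R}"
  shows "(cmod (mat_op M \<xi> s))\<^sup>2 \<le> C\<^sup>2 * real (card G) * (\<Sum>g\<in>G. (cmod (\<xi> (- g + s)))\<^sup>2)"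
proof -
  have "cmod (mat_op M \<xi> s) \<le> (\<Sum>g\<in>G. C * cmod (\<xi> (- g + s)))"
    unfolding mat_op_finite_propagation[OF assms(1,3)] G_def
    using assms(2) by (intro order_trans[OF norm_sum] sum_mono) (simp add: norm_mult mult_right_mono)
  also have "\<dots> = C * (\<Sum>g\<in>G. cmod (\<xi> (- g + s)))"
    by (simp add: sum_distrib_left)
  finally have "(cmod (mat_op M \<xi> s))\<^sup>2 \<le> (C * (\<Sum>g\<in>G. cmod (\<xi> (- g + s))))\<^sup>2"
    by (rule power_mono) simp
  also have "\<dots> = C\<^sup>2 * (\<Sum>g\<in>G. cmod (\<xi> (- g + s)))\<^sup>2"
    by (simp add: power_mult_distrib)
  also have "\<dots> \<le> C\<^sup>2 * ((\<Sum>g\<in>G. (cmod (\<xi> (- g + s)))\<^sup>2) * real (card G))"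
    by (intro mult_left_mono sum_squared_le_sum_of_squares) simp_all
  finally show ?thesis
    by (simp add: algebra_simps)
qed

lemma mat_op_l2_bound:
  assumes gen: "generating_set S"
    and MC: "\<forall>s t. cmod (M s t) \<le> C"
    and M0: "\<forall>s t. real (word_dist S s t) > R \<longrightarrow> M s t = 0"
    and "\<xi> \<in> l2"
  defines "N \<equiv> real (card {g. real (word_length S g) \<le> R})"
  shows "mat_op M \<xi> \<in> l2"
    and "(l2_norm (mat_op M \<xi>))\<^sup>2 \<le> C\<^sup>2 * N\<^sup>2 * (l2_norm \<xi>)\<^sup>2"
proof -
  define h where "h s = (\<Sum>g | real (word_length S g) \<le> R. (cmod (\<xi> (- g + s)))\<^sup>2)" for s
  have h_sum: "(h has_sum N * (l2_norm \<xi>)\<^sup>2) UNIV"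
    unfolding h_def N_def using finite_word_ball[OF gen] \<open>\<xi> \<in> l2\<close> by (rule has_sum_sum_translates)
  have pointwise: "(cmod (mat_op M \<xi> s))\<^sup>2 \<le> C\<^sup>2 * N * h s" for s
    unfolding h_def N_def using gen MC M0 by (rule mat_op_pointwise_bound)
  have "h summable_on UNIV"
    using h_sum by (rule has_sum_imp_summable)
  then have bound_summable: "(\<lambda>s. C\<^sup>2 * N * h s) summable_on UNIV"
    by (rule summable_on_cmult_right)
  have sq: "(\<lambda>s. (cmod (mat_op M \<xi> s))\<^sup>2) summable_on UNIV"
    by (rule summable_on_comparison_test[OF bound_summable]) (simp_all add: pointwise)
  then show "mat_op M \<xi> \<in> l2"
    by (simp add: l2_def)
  have "(l2_norm (mat_op M \<xi>))\<^sup>2 \<le> (\<Sum>\<^sub>\<infinity>s. C\<^sup>2 * N * h s)"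
    unfolding power2_l2_norm by (rule infsum_mono[OF sq bound_summable pointwise])
  also have "\<dots> = C\<^sup>2 * N\<^sup>2 * (l2_norm \<xi>)\<^sup>2"
    using infsum_cmult_right[OF \<open>h summable_on UNIV\<close>, of "C\<^sup>2 * N"] infsumI[OF h_sum]
    by (simp add: power2_eq_square)
  finally show "(l2_norm (mat_op M \<xi>))\<^sup>2 \<le> C\<^sup>2 * N\<^sup>2 * (l2_norm \<xi>)\<^sup>2" .
qed

lemma norm_bounded_op_mat_op:
  assumes "generating_set S"
    and "\<forall>s t. cmod (M s t) \<le> C"
    and "\<forall>s t. real (word_dist S s t) > R \<longrightarrow> M s t = 0"
  shows "norm_bounded_op (mat_op M)"
proof -
  let ?N = "real (card {g. real (word_length S g) \<le> R})"
  have "l2_norm (mat_op M \<xi>) \<le> \<bar>C\<bar> * ?N" if "\<xi> \<in> l2" "l2_norm \<xi> \<le> 1" for \<xi>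
  proof -
    have "(l2_norm (mat_op M \<xi>))\<^sup>2 \<le> C\<^sup>2 * ?N\<^sup>2 * (l2_norm \<xi>)\<^sup>2"
      using mat_op_l2_bound(2)[OF assms that(1)] by simp
    also have "\<dots> \<le> (\<bar>C\<bar> * ?N)\<^sup>2"
      using that l2_norm_nonneg[of \<xi>]
      by (simp add: power_mult_distrib mult_left_le power_le_one)
    finally show ?thesis
      by (simp add: power2_le_iff_abs_le)
  qed
  then show ?thesis
    unfolding norm_bounded_op_def using mat_op_l2_bound(1)[OF assms] by blast
qed

lemma UC_entries_tendsto_zero:
  assumes gen: "generating_set S" and "A \<in> UC S"
  shows "((\<lambda>(s, t). A (delta t) s) \<longlongrightarrow> 0) (filtercomap (\<lambda>(s, t). real (word_dist S s t)) at_top)"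
proof (rule tendstoI)
  fix \<epsilon> :: real
  assume "\<epsilon> > 0"
  then obtain M R C where MC: "\<forall>s t. cmod (M s t) \<le> C"
    and M0: "\<forall>s t. real (word_dist S s t) > R \<longrightarrow> M s t = 0"
    and approx: "op_norm (op_diff A (mat_op M)) < \<epsilon>"
    using assms(2) unfolding UC_def by blast
  have "norm_bounded_op A"
    using assms(2) by (simp add: UC_def bounded_op_imp_norm_bounded_op)
  then have "norm_bounded_op (op_diff A (mat_op M))"
    using norm_bounded_op_mat_op[OF gen MC M0] by (rule norm_bounded_op_diff)
  then have "cmod (A (delta t) s) < \<epsilon>" if "real (word_dist S s t) \<ge> R + 1" for s t
    using matrix_entry_le_op_norm[of _ t s] approx M0 that
    by (force simp: op_diff_def mat_op_delta)
  then show "eventually (\<lambda>p. dist ((\<lambda>(s, t). A (delta t) s) p) 0 < \<epsilon>)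
      (filtercomap (\<lambda>(s, t). real (word_dist S s t)) at_top)"
    unfolding eventually_filtercomap_at_top_linorder by (auto intro!: exI[of _ "R + 1"])
qed

lemma C0_Delta_u_T:
  assumes gen: "generating_set S" and bl: "bounded_linear_Cr T"
    and "finite_rank T" and UC: "\<forall>x\<in>Cr. T x \<in> UC S"
  shows "C0_Delta S (u_T T)"
proof -
  define F where "F = filtercomap (\<lambda>(s, t). real (word_dist S s t)) at_top"
  define entries where "entries g = (\<lambda>(s, t). T (lam g) (delta t) s)" for g
  obtain k and B :: "nat \<Rightarrow> 'a op" where B: "\<forall>x\<in>Cr. \<exists>c. \<forall>f\<in>l2. T x f = (\<lambda>z. \<Sum>i<k. c i * B i f z)"
    using \<open>finite_rank T\<close> unfolding finite_rank_def by blast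
  obtain K where K: "\<forall>g. op_norm (T (lam g)) \<le> K"
    using op_norm_T_lam_bounded[OF bl] by blast
  define E where "E i = (\<lambda>(s, t). B i (delta t) s)" for i
  have span: "in_span k E (entries g)" for g
  proof -
    obtain c where "\<forall>f\<in>l2. T (lam g) f = (\<lambda>z. \<Sum>i<k. c i * B i f z)"
      using B lam_in_Cr by blast
    then show ?thesis
      unfolding in_span_def entries_def E_def by (auto intro!: exI[of _ c])
  qed
  have lim: "(entries g \<longlongrightarrow> 0) F" for g
    unfolding entries_def F_def using UC lam_in_Cr by (intro UC_entries_tendsto_zero[OF gen]) blast
  have bound: "cmod (entries g p) \<le> K" for g p
    unfolding entries_def
    using order_trans[OF matrix_entry_le_op_norm[OF norm_bounded_op_T_lam[OF bl]] spec[OF K]]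
    by (simp split: prod.split)
  have "\<exists>R>0. \<forall>s t. real (word_dist S s t) > R \<longrightarrow> cmod (u_T T s t) < \<epsilon>" if "\<epsilon> > 0" for \<epsilon>
  proof -
    have "eventually (\<lambda>p. \<forall>f. in_span k E f \<and> (f \<longlongrightarrow> 0) F \<and> (\<forall>y. cmod (f y) \<le> K)
        \<longrightarrow> cmod (f p) < \<epsilon>) F"
      by (rule uniformly_tendsto_zero_in_span[OF that])
    then obtain N where N: "\<forall>p. (case p of (s, t) \<Rightarrow> real (word_dist S s t)) \<ge> N \<longrightarrow>
        (\<forall>f. in_span k E f \<and> (f \<longlongrightarrow> 0) F \<and> (\<forall>y. cmod (f y) \<le> K) \<longrightarrow> cmod (f p) < \<epsilon>)"
      unfolding F_def eventually_filtercomap_at_top_linorder by blast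
    show ?thesis
    proof (intro exI[of _ "max N 1"] conjI allI impI)
      fix s t
      assume "real (word_dist S s t) > max N 1"
      then have "cmod (entries (s - t) (s, t)) < \<epsilon>"
        using N[rule_format, of "(s, t)" "entries (s - t)"] span lim bound by simp
      then show "cmod (u_T T s t) < \<epsilon>"
        by (simp add: entries_def u_T_eq_entry)
    qed simp
  qed
  then show ?thesis
    unfolding C0_Delta_def using bounded_u_T[OF bl] by blast
qed

theorem mainTheorem4:
  fixes S :: "'g::group_add set"
    and T :: "'g op \<Rightarrow> 'g op"
    and le :: "'i \<Rightarrow> 'i \<Rightarrow> bool"
    and Tn :: "'i \<Rightarrow> 'g op \<Rightarrow> 'g op"
  assumes "generating_set S"
    and "bounded_linear_Cr T"
  shows "bounded_fun2 (u_T T)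
    \<and> (unital T \<and> completely_positive T \<longrightarrow> positive_definite (u_T T))
    \<and> (finite_rank T \<and> (\<forall>x\<in>Cr. T x \<in> UC S) \<longrightarrow> C0_Delta S (u_T T))
    \<and> (directed_set le \<and> (\<forall>a. bounded_linear_Cr (Tn a)) \<and>
        (\<forall>x\<in>Cr. \<forall>\<epsilon>>0. \<exists>a0. \<forall>a. le a0 a \<longrightarrow> op_norm (op_diff (Tn a x) x) < \<epsilon>)
       \<longrightarrow> (\<forall>R>0. \<forall>\<epsilon>>0. \<exists>a0. \<forall>a. le a0 a \<longrightarrow>
              (\<forall>s t. real (word_dist S s t) < R \<longrightarrow> cmod (u_T (Tn a) s t - 1) < \<epsilon>)))"
proof (intro conjI impI)
  show "bounded_fun2 (u_T T)"
    using assms(2) by (rule bounded_u_T)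
next
  assume "unital T \<and> completely_positive T"
  then show "positive_definite (u_T T)"
    using assms(2) by (intro positive_definite_u_T) simp_all
next
  assume "finite_rank T \<and> (\<forall>x\<in>Cr. T x \<in> UC S)"
  then show "C0_Delta S (u_T T)"
    using assms by (intro C0_Delta_u_T) simp_all
next
  assume approx: "directed_set le \<and> (\<forall>a. bounded_linear_Cr (Tn a)) \<and>
    (\<forall>x\<in>Cr. \<forall>\<epsilon>>0. \<exists>a0. \<forall>a. le a0 a \<longrightarrow> op_norm (op_diff (Tn a x) x) < \<epsilon>)"
  show "\<forall>R>0. \<forall>\<epsilon>>0. \<exists>a0. \<forall>a. le a0 a \<longrightarrow>
      (\<forall>s t. real (word_dist S s t) < R \<longrightarrow> cmod (u_T (Tn a) s t - 1) < \<epsilon>)"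
    using approx by (intro allI impI u_T_uniform_convergence_on_tubes[OF assms(1)]) simp_all
qed

end
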